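(* Let $H$, $L$ be as in the context. For every feasible solution $(S,\mathcal T_0)$, $\omega_{LB}:=\lceil\omega(H)/L\rceil\le\omega(H_{\mathcal T_0})$.
   Context: Notation: $[n)=\{0,1,\dots,n-1\}$. Let $M,N,Z$ be positive integers and let $H$ be a binary $MZ\times NZ$ matrix made of $M\times N$ blocks, each a $Z\times Z$ circulant; assume $H$ has no zero row and no two identical rows. For $\mathcal A\subseteq[MZ)$, $H_{\mathcal A}$ is the submatrix of rows indexed by $\mathcal A$; $\omega(A)$ is the maximum Hamming weight of a column of $A$. For $i\in[MZ)$ and integer $s$, $\pi^s(i)=Z\lfloor i/Z\rfloor+((i+s)\bmod Z)$ and $\pi^s(\mathcal T)=\{\pi^s(x):x\in\mathcal T\}$. Fix an integer $L>1$. A pair $(S,\mathcal T_0)$ ($S$ a positive integer, $\mathcal T_0\subseteq[MZ)$) is a feasible solution if, with $\mathcal T_l=\pi^{lS}(\mathcal T_0)$ for $l\in[L)$, the sets $\mathcal T_0,\dots,\mathcal T_{L-1}$ are pairwise disjoint with union $[MZ)$. *)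

theory Defs
  imports Complex_Main
begin

text \<open>A matrix is represented as a function H :: nat => nat => nat, meaningful on
  row indices i < M*Z and column indices j < N*Z.\<close>

definition binary_matrix :: "nat \<Rightarrow> nat \<Rightarrow> (nat \<Rightarrow> nat \<Rightarrow> nat) \<Rightarrow> bool" where
  "binary_matrix R C H \<longleftrightarrow> (\<forall>i<R. \<forall>j<C. H i j \<in> {0, 1})"

definition block_circulant :: "nat \<Rightarrow> nat \<Rightarrow> nat \<Rightarrow> (nat \<Rightarrow> nat \<Rightarrow> nat) \<Rightarrow> bool" where
  "block_circulant M N Z H \<longleftrightarrow>
     (\<forall>b<M. \<forall>c<N. \<forall>r<Z. \<forall>k<Z.
        H (b*Z + (r+1) mod Z) (c*Z + (k+1) mod Z) = H (b*Z + r) (c*Z + k))"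

definition no_zero_row :: "nat \<Rightarrow> nat \<Rightarrow> (nat \<Rightarrow> nat \<Rightarrow> nat) \<Rightarrow> bool" where
  "no_zero_row R C H \<longleftrightarrow> (\<forall>i<R. \<exists>j<C. H i j \<noteq> 0)"

definition no_identical_rows :: "nat \<Rightarrow> nat \<Rightarrow> (nat \<Rightarrow> nat \<Rightarrow> nat) \<Rightarrow> bool" where
  "no_identical_rows R C H \<longleftrightarrow> (\<forall>i<R. \<forall>i'<R. i \<noteq> i' \<longrightarrow> (\<exists>j<C. H i j \<noteq> H i' j))"

definition omega :: "nat \<Rightarrow> (nat \<Rightarrow> nat \<Rightarrow> nat) \<Rightarrow> nat set \<Rightarrow> nat" where
  "omega C H A = Max ((\<lambda>j. card {i \<in> A. H i j \<noteq> 0}) ` {..<C})"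

definition pi_shift :: "nat \<Rightarrow> int \<Rightarrow> nat \<Rightarrow> nat" where
  "pi_shift Z s i = Z * (i div Z) + nat ((int i + s) mod int Z)"

definition feasible :: "nat \<Rightarrow> nat \<Rightarrow> nat \<Rightarrow> nat \<Rightarrow> nat set \<Rightarrow> bool" where
  "feasible M Z L S T0 \<longleftrightarrow> S > 0 \<and> T0 \<subseteq> {..<M*Z} \<and>
     (\<forall>l<L. \<forall>l'<L. l \<noteq> l' \<longrightarrow>
        pi_shift Z (int (l*S)) ` T0 \<inter> pi_shift Z (int (l'*S)) ` T0 = {}) \<and>
     (\<Union>l<L. pi_shift Z (int (l*S)) ` T0) = {..<M*Z}"

end

theory Submission
  imports Defs
begin

(* Because all blocks of H are circulant, shifting both the row and the column index by
   pi^s leaves H unchanged. Hence the rows T_l = pi^(lS)(T_0) have the same column weights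
   as the rows T_0, only permuted among the columns, so omega(H_{T_l}) = omega(H_{T_0}).
   Since the L sets T_l cover all rows, every column weight of H is at most the sum of its
   weights in the H_{T_l}, giving omega(H) <= L omega(H_{T_0}). *)

lemma pi_shift_of_nat: "pi_shift Z (int s) i = Z * (i div Z) + (i + s) mod Z"
  unfolding pi_shift_def by (metis nat_int of_nat_add of_nat_mod)

lemma pi_shift_0 [simp]: "pi_shift Z 0 i = i"
  using pi_shift_of_nat[of Z 0 i] by simp

lemma pi_shift_mod: "pi_shift Z (s mod int Z) = pi_shift Z s"
  unfolding pi_shift_def by (simp add: mod_add_right_eq)

lemma pi_shift_div:
  assumes "Z > 0" shows "pi_shift Z s i div Z = i div Z"
  unfolding pi_shift_def using assms
  by (simp add: nat_less_iff)

lemma int_pi_shift_mod: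
  assumes "Z > 0" shows "int (pi_shift Z s i) mod int Z = (int i + s) mod int Z"
  unfolding pi_shift_def using assms
  by (simp add: of_nat_mult)

lemma pi_shift_pi_shift:
  assumes "Z > 0" shows "pi_shift Z s (pi_shift Z t i) = pi_shift Z (s + t) i"
proof -
  have "(int (pi_shift Z t i) + s) mod int Z = (int i + (s + t)) mod int Z"
    using int_pi_shift_mod[OF assms, of t i]
    by (metis add.commute add.left_commute mod_add_left_eq)
  then show ?thesis
    unfolding pi_shift_def[of Z s] using pi_shift_div[OF assms] by (simp add: pi_shift_def)
qed

lemma pi_shift_less:
  assumes "Z > 0" "i < M * Z" shows "pi_shift Z s i < M * Z"
proof -
  have "i div Z < M" using assms(2) by (simp add: less_mult_imp_div_less)
  then have "Z * (i div Z) + Z \<le> M * Z"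
    by (metis add.commute mult.commute mult_Suc_right Suc_leI mult_le_mono2 plus_1_eq_Suc)
  moreover have "nat ((int i + s) mod int Z) < Z" using assms(1) by (simp add: nat_less_iff)
  ultimately show ?thesis unfolding pi_shift_def by linarith
qed

lemma inj_pi_shift:
  assumes "Z > 0" shows "inj (pi_shift Z s)"
  by (rule inj_on_inverseI[where g = "pi_shift Z (- s)"]) (simp add: pi_shift_pi_shift[OF assms])

lemma pi_shift_image_lessThan:
  assumes "Z > 0" shows "pi_shift Z s ` {..<N * Z} = {..<N * Z}"
proof
  show "pi_shift Z s ` {..<N * Z} \<subseteq> {..<N * Z}" using pi_shift_less[OF assms] by auto
  show "{..<N * Z} \<subseteq> pi_shift Z s ` {..<N * Z}"
  proof
    fix j assume "j \<in> {..<N * Z}"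
    then have "pi_shift Z s (pi_shift Z (- s) j) = j" "pi_shift Z (- s) j \<in> {..<N * Z}"
      using pi_shift_less[OF assms] by (auto simp: pi_shift_pi_shift[OF assms])
    then show "j \<in> pi_shift Z s ` {..<N * Z}" by (metis imageI)
  qed
qed

lemma block_circulant_pi_shift_1:
  assumes "block_circulant M N Z H" "Z > 0" "i < M * Z" "j < N * Z"
  shows "H (pi_shift Z 1 i) (pi_shift Z 1 j) = H i j"
proof -
  have "i div Z < M" "j div Z < N" using assms(3,4) by (simp_all add: less_mult_imp_div_less)
  then have "H (i div Z * Z + (i mod Z + 1) mod Z) (j div Z * Z + (j mod Z + 1) mod Z)
             = H (i div Z * Z + i mod Z) (j div Z * Z + j mod Z)"
    using assms(1,2) unfolding block_circulant_def by simp
  then show ?thesis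
    using pi_shift_of_nat[of Z 1] by (simp add: mod_Suc_eq mult.commute)
qed

lemma block_circulant_pi_shift:
  assumes "block_circulant M N Z H" "Z > 0" "i < M * Z" "j < N * Z"
  shows "H (pi_shift Z s i) (pi_shift Z s j) = H i j"
proof -
  have "H (pi_shift Z (int t) i) (pi_shift Z (int t) j) = H i j" for t
  proof (induction t)
    case (Suc t)
    have "pi_shift Z (int (Suc t)) = pi_shift Z 1 \<circ> pi_shift Z (int t)"
      by (auto simp: pi_shift_pi_shift[OF assms(2)] add.commute)
    then show ?case
      using block_circulant_pi_shift_1[OF assms(1,2) pi_shift_less pi_shift_less] assms Suc.IH
      by simp
  qed simp
  from this[of "nat (s mod int Z)"] show ?thesis
    using assms(2) by (simp add: pi_shift_mod)
qed

lemma column_weight_pi_shift_image: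
  assumes "block_circulant M N Z H" "Z > 0" "T \<subseteq> {..<M * Z}" "j < N * Z"
  shows "card {i \<in> pi_shift Z s ` T. H i j \<noteq> 0} = card {i \<in> T. H i (pi_shift Z (- s) j) \<noteq> 0}"
proof -
  have "H (pi_shift Z s i) j = H i (pi_shift Z (- s) j)" if "i \<in> T" for i
    using block_circulant_pi_shift[OF assms(1,2), of i "pi_shift Z (- s) j" s] that assms(3,4)
      pi_shift_less[OF assms(2)] by (auto simp: pi_shift_pi_shift[OF assms(2)])
  then have "{i \<in> pi_shift Z s ` T. H i j \<noteq> 0} = pi_shift Z s ` {i \<in> T. H i (pi_shift Z (- s) j) \<noteq> 0}"
    by auto
  then show ?thesis
    using card_image[OF inj_on_subset[OF inj_pi_shift[OF assms(2)] subset_UNIV]] by simp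
qed

lemma omega_pi_shift_image:
  assumes "block_circulant M N Z H" "Z > 0" "T \<subseteq> {..<M * Z}"
  shows "omega (N * Z) H (pi_shift Z s ` T) = omega (N * Z) H T"
proof -
  have "(\<lambda>j. card {i \<in> pi_shift Z s ` T. H i j \<noteq> 0}) ` {..<N * Z}
      = (\<lambda>j. card {i \<in> T. H i j \<noteq> 0}) ` pi_shift Z (- s) ` {..<N * Z}"
    using column_weight_pi_shift_image[OF assms] by (auto simp: image_image)
  then show ?thesis
    unfolding omega_def pi_shift_image_lessThan[OF assms(2)] by simp
qed

lemma column_weight_le_omega:
  assumes "j < C" shows "card {i \<in> A. H i j \<noteq> 0} \<le> omega C H A"
  unfolding omega_def using assms by (intro Max_ge) auto

lemma omega_attained:
  assumes "C > 0" obtains j where "j < C" "omega C H A = card {i \<in> A. H i j \<noteq> 0}"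
proof -
  have "omega C H A \<in> (\<lambda>j. card {i \<in> A. H i j \<noteq> 0}) ` {..<C}"
    unfolding omega_def using assms by (intro Max_in) auto
  then show ?thesis using that by blast
qed

lemma omega_UN_le:
  assumes "C > 0" "finite I"
  shows "omega C H (\<Union>l\<in>I. A l) \<le> (\<Sum>l\<in>I. omega C H (A l))"
proof -
  obtain j where "j < C" and j: "omega C H (\<Union>l\<in>I. A l) = card {i \<in> (\<Union>l\<in>I. A l). H i j \<noteq> 0}"
    using omega_attained[OF assms(1)] .
  have "{i \<in> (\<Union>l\<in>I. A l). H i j \<noteq> 0} = (\<Union>l\<in>I. {i \<in> A l. H i j \<noteq> 0})" by blast
  then have "omega C H (\<Union>l\<in>I. A l) \<le> (\<Sum>l\<in>I. card {i \<in> A l. H i j \<noteq> 0})"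
    using j card_UN_le[OF assms(2)] by simp
  also have "\<dots> \<le> (\<Sum>l\<in>I. omega C H (A l))"
    using column_weight_le_omega[OF \<open>j < C\<close>] by (intro sum_mono)
  finally show ?thesis .
qed

theorem theorem5:
  fixes M N Z L S :: nat and H :: "nat \<Rightarrow> nat \<Rightarrow> nat" and T0 :: "nat set"
  assumes "M > 0" "N > 0" "Z > 0" "L > 1"
    and "binary_matrix (M*Z) (N*Z) H"
    and "block_circulant M N Z H"
    and "no_zero_row (M*Z) (N*Z) H"
    and "no_identical_rows (M*Z) (N*Z) H"
    and "feasible M Z L S T0"
  shows "\<lceil>real (omega (N*Z) H {..<M*Z}) / real L\<rceil> \<le> int (omega (N*Z) H T0)"
proof -
  have T0: "T0 \<subseteq> {..<M*Z}" and cover: "(\<Union>l<L. pi_shift Z (int (l*S)) ` T0) = {..<M*Z}"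
    using assms(9) unfolding feasible_def by auto
  have "omega (N*Z) H {..<M*Z} \<le> (\<Sum>l<L. omega (N*Z) H (pi_shift Z (int (l*S)) ` T0))"
    using omega_UN_le[of "N*Z" "{..<L}"] assms(2,3) by (simp flip: cover)
  also have "\<dots> = L * omega (N*Z) H T0"
    using omega_pi_shift_image[OF assms(6,3) T0] by simp
  finally have "real (omega (N*Z) H {..<M*Z}) / real L \<le> real (omega (N*Z) H T0)"
    using assms(4) by (simp add: divide_le_eq mult.commute flip: of_nat_mult)
  then show ?thesis by (simp add: ceiling_le_iff)
qed

end
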